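(* Let $d=2$ and $E\subset[1,2]$ with $\dim_{\mathrm{M}}E=\beta$. Then, for $1\le p\le q\le\infty$ satisfying $\frac1p-\frac{1-\beta}{q}-\frac12<0$, there is $C$ such that $\|R_{i,E}f_0\|_{L^q(\mu_2)}\le C\|f_0\|_{L^p(\mu_2)}$ for all $f_0$ and $i=1,2$, where $$R_{1,E}f_0(r)=\chi_{[2,\infty)}(r)\sup_{t\in E,\ t\le r/2}\int_{r-t}^{r}(s-r+t)^{-1/2}|f_0(s)|\,ds,$$ $$R_{2,E}f_0(r)=\chi_{[2,\infty)}(r)\sup_{t\in E,\ t\le r/2}\int_{r}^{r+t}(r+t-s)^{-1/2}|f_0(s)|\,ds.$$
   Context: $\mu_2$ is the measure $r\,dr$ on $\mathbb{R}^+$. $N(E,\delta)$ is the minimal number of intervals of length $\delta$ covering $E$, and $\dim_{\mathrm M}E=\inf\{a>0:\exists c,\ N(E,\delta)\le c\delta^{-a}\ \forall\delta\in(0,1)\}$. *)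

theory Defs
  imports "HOL-Analysis.Analysis" "HOL-Probability.Essential_Supremum"
begin

definition cover_num :: "real set \<Rightarrow> real \<Rightarrow> nat" where
  "cover_num E \<delta> = (LEAST n. \<exists>a::nat \<Rightarrow> real. E \<subseteq> (\<Union>i<n. {a i .. a i + \<delta>}))"

definition minkowski_dim :: "real set \<Rightarrow> real" where
  "minkowski_dim E = Inf {a. a > 0 \<and> (\<exists>c::real. \<forall>\<delta>\<in>{0<..<1}. real (cover_num E \<delta>) \<le> c * \<delta> powr (-a))}"

definition mu2 :: "real measure" where
  "mu2 = density lborel (\<lambda>r. ennreal r * indicator {0<..} r)"

definition enn_powr :: "ennreal \<Rightarrow> real \<Rightarrow> ennreal" where
  "enn_powr x a = (if x = \<infinity> then \<infinity> else ennreal (enn2real x powr a))"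

definition Lp_norm :: "'a measure \<Rightarrow> ennreal \<Rightarrow> ('a \<Rightarrow> ennreal) \<Rightarrow> ennreal" where
  "Lp_norm M p g = (if p = \<infinity> then esssup M g
     else enn_powr (\<integral>\<^sup>+ x. enn_powr (g x) (enn2real p) \<partial>M) (1 / enn2real p))"

definition recip_exp :: "ennreal \<Rightarrow> real" where
  "recip_exp p = (if p = \<infinity> then 0 else 1 / enn2real p)"

definition R1 :: "real set \<Rightarrow> (real \<Rightarrow> real) \<Rightarrow> real \<Rightarrow> ennreal" where
  "R1 E f r = indicator {2..} r *
     (SUP t\<in>{t\<in>E. t \<le> r / 2}. \<integral>\<^sup>+ s. ennreal (indicator {r - t .. r} s * (s - r + t) powr (-1/2) * \<bar>f s\<bar>) \<partial>lborel)"

definition R2 :: "real set \<Rightarrow> (real \<Rightarrow> real) \<Rightarrow> real \<Rightarrow> ennreal" where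
  "R2 E f r = indicator {2..} r *
     (SUP t\<in>{t\<in>E. t \<le> r / 2}. \<integral>\<^sup>+ s. ennreal (indicator {r .. r + t} s * (r + t - s) powr (-1/2) * \<bar>f s\<bar>) \<partial>lborel)"

end

theory Submission
  imports Defs
begin

(*
  Put u = s - r + t for R1 and u = r + t - s for R2 (sigma = 1 and sigma = -1 below), so that the
  kernel is u^(-1/2) on 0 < u <= t. On the dyadic range 2^-j < u <= 2^(1-j) it is at most 2^(j/2),
  and s lies within 2^(1-j) of r - sigma a whenever a <= t <= a + 2^(-j-1). There also s >= r/2,
  so |f(s)| <= (2/r)^(1/p) F(s) with F(s) = s^(1/p) |f(s)|, and the L^p(mu_2) norm of f is the
  Lebesgue L^p norm of F.

  For q < infinity, cover E at scale 2^(-j-1) by N_j <~ 2^(j alpha) intervals, alpha > dim_M E.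
  The supremum over t in E is bounded by the sum over j of 2^(j/2) times the largest of N_j local
  integrals of F at scale 2^(1-j). Trading this l^1 sum for an l^q sum with geometric weights,
  integrating in r (the density r of mu_2 times (2/r)^(q/p) is at most 2) and using Hoelder on
  intervals, each local integral has q-th power integral <~ 2^(-j(q - q/p + 1)) ||F||_p^q. The
  resulting geometric series in j converges iff 1/p - (1 - alpha)/q - 1/2 < 0, which holds for
  alpha close enough to dim_M E.

  For q = infinity the decomposition with a = t gives the pointwise bound
  sum_j 2^(j/2) 2^(-j(1 - 1/p)) ||F||_p, finite for p > 2. The essential supremum requires
  measurability of the supremum over the possibly uncountable E; it is reduced to a countable
  supremum since the kernel integral is lower semicontinuous in t from the left.
*)

lemma enn_powr_ennreal: "0 \<le> x \<Longrightarrow> enn_powr (ennreal x) a = ennreal (x powr a)"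
  by (simp add: enn_powr_def)

lemma enn_powr_top [simp]: "enn_powr top a = top"
  by (simp add: enn_powr_def)

lemma enn_powr_zero [simp]: "enn_powr 0 a = 0"
  by (simp add: enn_powr_def)

lemma enn_powr_one [simp]: "enn_powr x 1 = x"
  by (cases x) (auto simp: enn_powr_ennreal)

lemma enn_powr_mono:
  assumes "0 \<le> a" "x \<le> y"
  shows "enn_powr x a \<le> enn_powr y a"
proof (cases y)
  case (real y')
  with assms obtain x' where "x = ennreal x'" "0 \<le> x'" "x' \<le> y'"
    by (cases x) (auto simp: ennreal_le_iff2 top_unique)
  with real assms show ?thesis
    by (simp add: enn_powr_ennreal powr_mono2)
qed simp

lemma enn_powr_mult:
  assumes "0 \<le> c"
  shows "enn_powr (ennreal c * x) a = ennreal (c powr a) * enn_powr x a"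
proof (cases x)
  case (real x')
  with assms show ?thesis
    by (simp add: enn_powr_ennreal flip: ennreal_mult) (simp add: powr_mult ennreal_mult)
next
  case top
  with assms show ?thesis
    by (cases "c = 0") (simp_all add: ennreal_mult_top)
qed

lemma enn_powr_powr: "enn_powr (enn_powr x a) b = enn_powr x (a * b)"
  by (cases x) (simp_all add: enn_powr_ennreal powr_powr)

lemma enn_powr_add: "enn_powr x (a + b) = enn_powr x a * enn_powr x b"
  by (cases x) (simp_all add: enn_powr_ennreal powr_add ennreal_mult)

lemma enn_powr_measurable [measurable]:
  assumes [measurable]: "g \<in> borel_measurable M"
  shows "(\<lambda>x. enn_powr (g x) a) \<in> borel_measurable M"
  unfolding enn_powr_def by measurable

lemma ennreal_le_suminf: "(f :: nat \<Rightarrow> ennreal) j \<le> suminf f"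
  using sum_le_suminf[OF summableI, of "{j}" f] by simp

lemma suminf_le_geometric:
  fixes x :: "nat \<Rightarrow> ennreal"
  assumes "0 \<le> \<theta>" "\<theta> < 1" "\<And>j. x j \<le> c * ennreal (\<theta> ^ j)"
  shows "suminf x \<le> c * ennreal (1 / (1 - \<theta>))"
proof -
  have "suminf x \<le> (\<Sum>j. c * ennreal (\<theta> ^ j))"
    by (intro suminf_le summableI assms(3))
  also have "\<dots> = c * (\<Sum>j. ennreal (\<theta> ^ j))"
    by (rule ennreal_suminf_cmult)
  also have "(\<Sum>j. ennreal (\<theta> ^ j)) = ennreal (1 / (1 - \<theta>))"
    using assms by (subst suminf_ennreal2) (auto simp: suminf_geometric summable_geometric)
  finally show ?thesis .
qed

lemma suminf_geometric_le_lq: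
  fixes z :: "nat \<Rightarrow> ennreal"
  assumes w: "0 \<le> w" "w < 1" and q: "0 < q"
  shows "(\<Sum>j. ennreal (w ^ j) * z j) \<le> enn_powr (\<Sum>j. enn_powr (z j) q) (1 / q) * ennreal (1 / (1 - w))"
proof (rule suminf_le_geometric[OF w])
  fix j
  have "z j = enn_powr (enn_powr (z j) q) (1 / q)"
    using q by (simp add: enn_powr_powr)
  also have "\<dots> \<le> enn_powr (\<Sum>j. enn_powr (z j) q) (1 / q)"
    using q by (intro enn_powr_mono ennreal_le_suminf) auto
  finally show "ennreal (w ^ j) * z j \<le> enn_powr (\<Sum>j. enn_powr (z j) q) (1 / q) * ennreal (w ^ j)"
    by (subst mult.commute) (rule mult_right_mono, simp_all)
qed

section \<open>Jensen's inequality on sets of finite measure\<close>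

lemma powr_tangent_le:
  fixes p m x :: real
  assumes "1 \<le> p" "0 < m" "0 \<le> x"
  shows "p * m powr (p - 1) * x \<le> x powr p + (p - 1) * m powr p"
proof (cases "p = 1")
  case False
  then have p1: "p > 1"
    using assms by simp
  define q where "q = p / (p - 1)"
  have q1: "q > 1"
    using p1 by (simp add: q_def)
  have pq: "1/p + 1/q = 1"
    using p1 by (simp add: q_def field_simps)
  have "x * m powr (p - 1) \<le> x powr p / p + (m powr (p - 1)) powr q / q"
    by (rule Youngs_inequality) (use p1 q1 pq assms in auto)
  also have "(m powr (p - 1)) powr q = m powr p"
    using p1 by (simp add: powr_powr q_def)
  finally have "x * m powr (p - 1) \<le> x powr p / p + m powr p / q" .
  then have "p * (x * m powr (p - 1)) \<le> p * (x powr p / p + m powr p / q)"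
    using p1 by simp
  also have "\<dots> = x powr p + (p - 1) * m powr p"
    using p1 by (simp add: q_def field_simps)
  finally show ?thesis
    by (simp add: mult_ac)
qed (use assms in simp)

lemma nn_set_integral_tangent_le:
  fixes F :: "'a \<Rightarrow> real"
  assumes [measurable]: "F \<in> borel_measurable M" "A \<in> sets M"
    and F: "\<And>x. 0 \<le> F x" and p: "1 \<le> p" and m: "0 < m"
    and A: "emeasure M A = ennreal l" and l: "0 \<le> l"
  shows "ennreal (p * m powr (p - 1)) * (\<integral>\<^sup>+x\<in>A. ennreal (F x) \<partial>M)
           \<le> (\<integral>\<^sup>+x\<in>A. ennreal (F x powr p) \<partial>M) + ennreal ((p - 1) * m powr p * l)"
proof -
  have "ennreal (p * m powr (p - 1)) * (\<integral>\<^sup>+x\<in>A. ennreal (F x) \<partial>M)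
      = (\<integral>\<^sup>+x\<in>A. ennreal (p * m powr (p - 1) * F x) \<partial>M)"
    using p F by (subst nn_integral_cmult[symmetric]) (auto simp: ennreal_mult mult.assoc)
  also have "\<dots> \<le> (\<integral>\<^sup>+x\<in>A. ennreal (F x powr p) + ennreal ((p - 1) * m powr p) \<partial>M)"
    using powr_tangent_le[OF p m F] p
    by (intro nn_integral_mono) (auto simp: indicator_def simp flip: ennreal_plus intro!: ennreal_leI)
  also have "\<dots> = (\<integral>\<^sup>+x\<in>A. ennreal (F x powr p) \<partial>M) + ennreal ((p - 1) * m powr p) * emeasure M A"
    unfolding distrib_right by (subst nn_integral_add) (auto simp: nn_integral_cmult_indicator)
  finally show ?thesis
    using p l by (simp add: A ennreal_mult)
qed

lemma powr_le_of_tangent_bounds: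
  fixes p l \<gamma> h :: real
  assumes p: "1 \<le> p" and l: "0 < l" and \<gamma>: "0 \<le> \<gamma>" and h: "0 \<le> h"
    and tangent: "\<And>m. 0 < m \<Longrightarrow> p * m powr (p - 1) * \<gamma> \<le> h + (p - 1) * m powr p * l"
  shows "\<gamma> powr p \<le> l powr (p - 1) * h"
proof (cases "\<gamma> = 0")
  case False
  define m where "m = \<gamma> / l"
  have m: "0 < m"
    using False \<gamma> l by (simp add: m_def)
  have E: "p * m powr (p - 1) * \<gamma> = p * (m powr p * l)"
    using m l by (simp add: m_def powr_diff field_simps)
  have "m powr p * l \<le> h"
    using tangent[OF m, unfolded E] by (simp add: algebra_simps)
  then have "m powr p * l * l powr (p - 1) \<le> h * l powr (p - 1)"
    by (simp add: mult_right_mono)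
  moreover have "m powr p * l * l powr (p - 1) = \<gamma> powr p"
    using m l \<gamma> by (simp add: m_def powr_divide powr_diff field_simps)
  ultimately show ?thesis
    by (simp add: mult.commute)
qed (use p l h in simp)

lemma nn_set_integral_powr_le:
  fixes F :: "'a \<Rightarrow> real"
  assumes [measurable]: "F \<in> borel_measurable M" "A \<in> sets M"
    and F: "\<And>x. 0 \<le> F x" and p: "1 \<le> p"
    and A: "emeasure M A = ennreal l" and l: "0 \<le> l"
  shows "enn_powr (\<integral>\<^sup>+x\<in>A. ennreal (F x) \<partial>M) p
           \<le> ennreal (l powr (p - 1)) * (\<integral>\<^sup>+x\<in>A. ennreal (F x powr p) \<partial>M)"
proof -
  define G where "G = (\<integral>\<^sup>+x\<in>A. ennreal (F x) \<partial>M)"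
  define H where "H = (\<integral>\<^sup>+x\<in>A. ennreal (F x powr p) \<partial>M)"
  note tangent = nn_set_integral_tangent_le[OF assms(1,2) F p _ A l, folded G_def H_def]
  consider (null) "l = 0" | (infinite) "0 < l" "H = top" | (finite) h where "0 < l" "H = ennreal h" "0 \<le> h"
    using l by (cases H) force+
  then show ?thesis
  proof cases
    case null
    then have "A \<in> null_sets M"
      using A by (simp add: null_sets_def)
    then show ?thesis
      by (simp add: nn_integral_null_set)
  next
    case infinite
    then show ?thesis
      by (simp add: H_def ennreal_mult_top)
  next
    case (finite h)
    have "ennreal p * G < top"
      using tangent[of 1] p finite by (simp add: ennreal_plus[symmetric] del: ennreal_plus) (simp add: le_less_trans)
    then obtain \<gamma> where \<gamma>: "G = ennreal \<gamma>" "0 \<le> \<gamma>"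
      using p by (cases G) (auto simp: ennreal_mult_top)
    have "\<gamma> powr p \<le> l powr (p - 1) * h"
    proof (rule powr_le_of_tangent_bounds[OF p finite(1) \<gamma>(2) finite(3)])
      fix m :: real
      assume "0 < m"
      then show "p * m powr (p - 1) * \<gamma> \<le> h + (p - 1) * m powr p * l"
        using tangent[of m] p \<gamma> finite by (simp add: ennreal_mult[symmetric] ennreal_plus[symmetric] del: ennreal_plus)
    qed
    then show ?thesis
      using \<gamma> finite l by (simp add: G_def[symmetric] H_def[symmetric] enn_powr_ennreal ennreal_mult[symmetric])
  qed
qed

definition weighted :: "real \<Rightarrow> (real \<Rightarrow> real) \<Rightarrow> real \<Rightarrow> real" where
  "weighted a f s = indicator {0<..} s * \<bar>f s\<bar> * s powr a"

lemma weighted_nonneg: "0 \<le> weighted a f s"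
  by (simp add: weighted_def)

lemma weighted_measurable [measurable]:
  assumes [measurable]: "f \<in> borel_measurable borel"
  shows "weighted a f \<in> borel_measurable borel"
  unfolding weighted_def by measurable

lemma AE_mu2: "(AE s in mu2. P s) \<longleftrightarrow> (AE s in lborel. 0 < s \<longrightarrow> P s)"
  unfolding mu2_def by (subst AE_density) (auto simp: indicator_def)

lemma esssup_mu2:
  fixes g :: "real \<Rightarrow> ennreal"
  assumes [measurable]: "g \<in> borel_measurable borel"
  shows "esssup mu2 g = esssup lborel (\<lambda>s. g s * indicator {0<..} s)"
proof -
  have "(AE s in mu2. g s \<le> z) \<longleftrightarrow> (AE s in lborel. g s * indicator {0<..} s \<le> z)" for z
    unfolding AE_mu2 by (rule AE_cong) (simp add: indicator_def)
  moreover have "g \<in> borel_measurable mu2"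
    by (simp add: mu2_def)
  ultimately show ?thesis
    by (simp add: esssup_eq_AE)
qed

lemma Lp_norm_mu2_weighted:
  assumes [measurable]: "f \<in> borel_measurable borel" and p: "1 \<le> p"
  shows "Lp_norm mu2 p (\<lambda>s. ennreal \<bar>f s\<bar>) = Lp_norm lborel p (\<lambda>s. ennreal (weighted (recip_exp p) f s))"
proof (cases p)
  case (real p')
  with p have p': "1 \<le> p'"
    using ennreal_le_iff by fastforce
  have "(\<integral>\<^sup>+s. enn_powr (ennreal \<bar>f s\<bar>) p' \<partial>mu2)
      = (\<integral>\<^sup>+s. (ennreal s * indicator {0<..} s) * ennreal (\<bar>f s\<bar> powr p') \<partial>lborel)"
    unfolding mu2_def by (subst nn_integral_density) (auto simp: enn_powr_ennreal)
  also have "\<dots> = (\<integral>\<^sup>+s. enn_powr (ennreal (weighted (1 / p') f s)) p' \<partial>lborel)"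
  proof (intro nn_integral_cong)
    fix s :: real
    have "weighted (1 / p') f s powr p' = indicator {0<..} s * s * \<bar>f s\<bar> powr p'"
      using p' by (simp add: weighted_def indicator_def powr_mult powr_powr)
    then show "(ennreal s * indicator {0<..} s) * ennreal (\<bar>f s\<bar> powr p') = enn_powr (ennreal (weighted (1 / p') f s)) p'"
      by (simp add: weighted_nonneg enn_powr_ennreal indicator_def ennreal_mult)
  qed
  finally show ?thesis
    using real p' by (simp add: Lp_norm_def recip_exp_def)
next
  case top
  have "(\<lambda>s. ennreal (weighted 0 f s)) = (\<lambda>s. ennreal \<bar>f s\<bar> * indicator {0<..} s)"
    by (auto simp: weighted_def indicator_def)
  then show ?thesis
    using top by (simp add: Lp_norm_def recip_exp_def esssup_mu2)
qed

definition ball_integral :: "(real \<Rightarrow> real) \<Rightarrow> real \<Rightarrow> real \<Rightarrow> ennreal" where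
  "ball_integral F x \<rho> = (\<integral>\<^sup>+s\<in>{x - \<rho>..x + \<rho>}. ennreal (F s) \<partial>lborel)"

lemma indicator_ball_measurable [measurable]:
  fixes \<rho> :: real
  shows "(\<lambda>(x, s). indicator {x - \<rho>..x + \<rho>} s :: ennreal) \<in> borel_measurable (borel \<Otimes>\<^sub>M borel)"
proof -
  have "(\<lambda>(x, s). indicator {x - \<rho>..x + \<rho>} s :: ennreal) = (\<lambda>(x, s). if x - \<rho> \<le> s \<and> s \<le> x + \<rho> then 1 else 0)"
    by (auto simp: indicator_def fun_eq_iff)
  also have "\<dots> \<in> borel_measurable (borel \<Otimes>\<^sub>M borel)"
    by measurable
  finally show ?thesis .
qed

lemma ball_integral_measurable [measurable]:
  assumes [measurable]: "F \<in> borel_measurable borel"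
  shows "(\<lambda>x. ball_integral F x \<rho>) \<in> borel_measurable borel"
  unfolding ball_integral_def by (rule lborel.borel_measurable_nn_integral) measurable

lemma nn_integral_ball_integral:
  assumes [measurable]: "h \<in> borel_measurable borel" and "0 \<le> \<rho>"
  shows "(\<integral>\<^sup>+x. (\<integral>\<^sup>+s\<in>{x - \<rho>..x + \<rho>}. h s \<partial>lborel) \<partial>lborel) = ennreal (2 * \<rho>) * (\<integral>\<^sup>+s. h s \<partial>lborel)"
proof -
  have "(\<integral>\<^sup>+x. (\<integral>\<^sup>+s\<in>{x - \<rho>..x + \<rho>}. h s \<partial>lborel) \<partial>lborel)
      = (\<integral>\<^sup>+s. (\<integral>\<^sup>+x. h s * indicator {s - \<rho>..s + \<rho>} x \<partial>lborel) \<partial>lborel)"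
    by (subst lborel_pair.Fubini') (auto intro!: nn_integral_cong simp: indicator_def)
  also have "\<dots> = (\<integral>\<^sup>+s. ennreal (2 * \<rho>) * h s \<partial>lborel)"
    using assms(2) by (simp add: nn_integral_cmult_indicator mult.commute)
  finally show ?thesis
    by (simp add: nn_integral_cmult)
qed

lemma ball_integral_le_Lp_norm:
  assumes [measurable]: "F \<in> borel_measurable borel"
    and F: "\<And>s. 0 \<le> F s" and p: "1 \<le> p" and \<rho>: "0 \<le> \<rho>"
  shows "ball_integral F x \<rho> \<le> ennreal ((2 * \<rho>) powr (1 - recip_exp p)) * Lp_norm lborel p (\<lambda>s. ennreal (F s))"
proof (cases p)
  case (real p')
  with p have p': "1 \<le> p'"
    using ennreal_le_iff by fastforce
  have H: "(\<integral>\<^sup>+s\<in>{x - \<rho>..x + \<rho>}. ennreal (F s powr p') \<partial>lborel) \<le> (\<integral>\<^sup>+s. ennreal (F s powr p') \<partial>lborel)"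
    by (intro nn_integral_mono) (simp add: indicator_def)
  have "ball_integral F x \<rho> = enn_powr (enn_powr (ball_integral F x \<rho>) p') (1 / p')"
    using p' by (simp add: enn_powr_powr)
  also have "\<dots> \<le> enn_powr (ennreal ((2 * \<rho>) powr (p' - 1)) * (\<integral>\<^sup>+s\<in>{x - \<rho>..x + \<rho>}. ennreal (F s powr p') \<partial>lborel)) (1 / p')"
    unfolding ball_integral_def using p' F \<rho>
    by (intro enn_powr_mono nn_set_integral_powr_le) auto
  also have "\<dots> \<le> ennreal ((2 * \<rho>) powr (1 - 1 / p')) * enn_powr (\<integral>\<^sup>+s. ennreal (F s powr p') \<partial>lborel) (1 / p')"
    using p' \<rho> H by (simp add: enn_powr_mult powr_powr diff_divide_distrib mult_left_mono enn_powr_mono)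
  finally show ?thesis
    using real p' F by (simp add: Lp_norm_def recip_exp_def enn_powr_ennreal)
next
  case top
  have "AE s in lborel. ennreal (F s) \<le> esssup lborel (\<lambda>s. ennreal (F s))"
    by (rule esssup_AE)
  then have "ball_integral F x \<rho> \<le> (\<integral>\<^sup>+s\<in>{x - \<rho>..x + \<rho>}. esssup lborel (\<lambda>s. ennreal (F s)) \<partial>lborel)"
    unfolding ball_integral_def by (intro nn_integral_mono_AE) (auto elim!: eventually_mono simp: indicator_def)
  also have "\<dots> = ennreal (2 * \<rho>) * esssup lborel (\<lambda>s. ennreal (F s))"
    using \<rho> by (simp add: nn_integral_cmult_indicator mult.commute)
  finally show ?thesis
    using top \<rho> by (simp add: Lp_norm_def recip_exp_def)
qed

lemma ball_integral_Lq_le: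
  fixes p q :: real
  assumes [measurable]: "F \<in> borel_measurable borel"
    and F: "\<And>s. 0 \<le> F s" and p: "1 \<le> p" "p \<le> q" and \<rho>: "0 \<le> \<rho>"
  shows "(\<integral>\<^sup>+x. enn_powr (ball_integral F x \<rho>) q \<partial>lborel)
           \<le> ennreal ((2 * \<rho>) powr (q - q / p + 1)) * enn_powr (Lp_norm lborel (ennreal p) (\<lambda>s. ennreal (F s))) q"
proof -
  define L where "L = Lp_norm lborel (ennreal p) (\<lambda>s. ennreal (F s))"
  define c where "c = (2 * \<rho>) powr (1 - 1 / p)"
  define H where "H x = ball_integral (\<lambda>s. F s powr p) x \<rho>" for x
  have [measurable]: "H \<in> borel_measurable borel"
    unfolding H_def[abs_def] by measurable
  have L: "enn_powr L p = (\<integral>\<^sup>+s. ennreal (F s powr p) \<partial>lborel)"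
    using p F by (simp add: L_def Lp_norm_def enn_powr_powr enn_powr_ennreal)
  \<comment> \<open>split \<open>g\<^sup>q = g\<^bsup>q-p\<^esup> g\<^sup>p\<close>: bound the first factor uniformly, integrate the second by Fubini\<close>
  have "enn_powr (ball_integral F x \<rho>) q \<le> enn_powr (ennreal c * L) (q - p) * ennreal ((2 * \<rho>) powr (p - 1)) * H x" for x
  proof -
    have B: "ball_integral F x \<rho> \<le> ennreal c * L"
      using ball_integral_le_Lp_norm[of F "ennreal p" \<rho> x] p F \<rho> by (simp add: c_def L_def recip_exp_def)
    have "enn_powr (ball_integral F x \<rho>) q = enn_powr (ball_integral F x \<rho>) (q - p) * enn_powr (ball_integral F x \<rho>) p"
      by (simp flip: enn_powr_add)
    also have "\<dots> \<le> enn_powr (ennreal c * L) (q - p) * (ennreal ((2 * \<rho>) powr (p - 1)) * H x)"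
      unfolding H_def using p F \<rho> B
      by (intro mult_mono enn_powr_mono) (auto simp: ball_integral_def intro!: nn_set_integral_powr_le)
    finally show ?thesis
      by (simp add: mult.assoc)
  qed
  then have "(\<integral>\<^sup>+x. enn_powr (ball_integral F x \<rho>) q \<partial>lborel)
      \<le> enn_powr (ennreal c * L) (q - p) * ennreal ((2 * \<rho>) powr (p - 1)) * (\<integral>\<^sup>+x. H x \<partial>lborel)"
    by (subst nn_integral_cmult[symmetric]) (auto simp: H_def intro!: nn_integral_mono)
  also have "(\<integral>\<^sup>+x. H x \<partial>lborel) = ennreal (2 * \<rho>) * enn_powr L p"
    unfolding H_def L ball_integral_def using \<rho> by (simp add: nn_integral_ball_integral)
  also have "enn_powr (ennreal c * L) (q - p) * ennreal ((2 * \<rho>) powr (p - 1)) * (ennreal (2 * \<rho>) * enn_powr L p)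
      = ennreal (c powr (q - p) * (2 * \<rho>) powr (p - 1) * (2 * \<rho>)) * (enn_powr L (q - p) * enn_powr L p)"
    unfolding enn_powr_mult[OF powr_ge_zero[of "2 * \<rho>" "1 - 1 / p", folded c_def]]
    using \<rho> by (simp add: ennreal_mult mult_ac)
  also have "c powr (q - p) * (2 * \<rho>) powr (p - 1) * (2 * \<rho>) = (2 * \<rho>) powr (q - q / p + 1)"
  proof -
    have "c powr (q - p) * (2 * \<rho>) powr (p - 1) * (2 * \<rho>) powr 1
        = (2 * \<rho>) powr ((1 - 1 / p) * (q - p) + (p - 1) + 1)"
      by (simp only: c_def powr_powr powr_add)
    also have "(1 - 1 / p) * (q - p) + (p - 1) + 1 = q - q / p + 1"
      using p by (simp add: field_simps)
    finally show ?thesis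
      using \<rho> by simp
  qed
  finally show ?thesis
    by (simp add: L_def flip: enn_powr_add)
qed

section \<open>Dyadic decomposition of the kernel\<close>

definition sqrt_kernel :: "real \<Rightarrow> real \<Rightarrow> real \<Rightarrow> real \<Rightarrow> real" where
  "sqrt_kernel \<sigma> t r s = indicator {0..t} (\<sigma> * (s - r) + t) * (\<sigma> * (s - r) + t) powr (-1/2)"

definition kernel_integral :: "real \<Rightarrow> (real \<Rightarrow> real) \<Rightarrow> real \<Rightarrow> real \<Rightarrow> ennreal" where
  "kernel_integral \<sigma> f r t = (\<integral>\<^sup>+s. ennreal (sqrt_kernel \<sigma> t r s * \<bar>f s\<bar>) \<partial>lborel)"

definition kernel_maximal :: "real \<Rightarrow> real set \<Rightarrow> (real \<Rightarrow> real) \<Rightarrow> real \<Rightarrow> ennreal" where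
  "kernel_maximal \<sigma> E f r = indicator {2..} r * (SUP t\<in>{t\<in>E. t \<le> r / 2}. kernel_integral \<sigma> f r t)"

lemma R1_eq_kernel_maximal: "R1 E f = kernel_maximal 1 E f"
  unfolding R1_def kernel_maximal_def kernel_integral_def sqrt_kernel_def
  by (intro ext arg_cong2[where f="(*)"] refl SUP_cong nn_integral_cong arg_cong[where f=ennreal])
     (auto simp: indicator_def algebra_simps)

lemma R2_eq_kernel_maximal: "R2 E f = kernel_maximal (-1) E f"
  unfolding R2_def kernel_maximal_def kernel_integral_def sqrt_kernel_def
  by (intro ext arg_cong2[where f="(*)"] refl SUP_cong nn_integral_cong arg_cong[where f=ennreal])
     (auto simp: indicator_def algebra_simps)

lemma half_power_eq_powr: "(1/2 :: real) ^ j = 2 powr (- real j)"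
  by (simp add: powr_realpow power_one_over powr_minus_divide)

lemma dyadic_bracket:
  fixes u :: real
  assumes "0 < u" "u \<le> 2"
  obtains j where "(1/2) ^ j < u" "u \<le> 2 * (1/2) ^ j"
proof (cases "1 < u")
  case True
  then show ?thesis using assms by (intro that[of 0]) auto
next
  case False
  obtain n where "(1/2 :: real) ^ n < u"
    using real_arch_pow_inv[of u "1/2"] assms by auto
  then obtain j where "\<not> (1/2 :: real) ^ j < u" "(1/2) ^ Suc j < u"
    using exists_least_lemma[of "\<lambda>j. (1/2 :: real) ^ j < u"] False by auto
  then show ?thesis
    by (intro that[of "Suc j"]) auto
qed

lemma sqrt_kernel_le_dyadic:
  assumes \<sigma>: "\<sigma> \<in> {-1, 1}" and t: "t \<le> 2" "2 * t \<le> r"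
    and a: "\<And>j. a j \<le> t" "\<And>j. t \<le> a j + (1/2) ^ (j + 1)"
    and K: "sqrt_kernel \<sigma> t r s \<noteq> 0"
  shows "r / 2 \<le> s"
    and "\<exists>j. sqrt_kernel \<sigma> t r s \<le> 2 powr (real j / 2) \<and> s \<in> {r - \<sigma> * a j - 2 * (1/2) ^ j..r - \<sigma> * a j + 2 * (1/2) ^ j}"
proof -
  define u where "u = \<sigma> * (s - r) + t"
  have u: "0 < u" "u \<le> t" and Ku: "sqrt_kernel \<sigma> t r s = u powr (-1/2)"
    using K by (auto simp: sqrt_kernel_def u_def[symmetric] indicator_def split: if_splits)
  have s: "s = r + \<sigma> * (u - t)"
    using \<sigma> by (auto simp: u_def)
  show "r / 2 \<le> s"
    using \<sigma> u t by (auto simp: s)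
  obtain j where j: "(1/2) ^ j < u" "u \<le> 2 * (1/2) ^ j"
    using dyadic_bracket[of u] u t by auto
  have "u powr (-1/2) \<le> ((1/2) ^ j) powr (-1/2)"
    using j by (intro powr_mono2') auto
  also have "((1/2 :: real) ^ j) powr (-1/2) = 2 powr (real j / 2)"
    by (simp add: half_power_eq_powr powr_powr)
  finally have "sqrt_kernel \<sigma> t r s \<le> 2 powr (real j / 2)"
    by (simp add: Ku)
  moreover have "s \<in> {r - \<sigma> * a j - 2 * (1/2) ^ j..r - \<sigma> * a j + 2 * (1/2) ^ j}"
    using \<sigma> j a[of j] by (auto simp: s)
  ultimately show "\<exists>j. sqrt_kernel \<sigma> t r s \<le> 2 powr (real j / 2) \<and> s \<in> {r - \<sigma> * a j - 2 * (1/2) ^ j..r - \<sigma> * a j + 2 * (1/2) ^ j}"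
    by blast
qed

lemma abs_le_weighted:
  assumes "0 < r" "r / 2 \<le> s" "0 \<le> a"
  shows "\<bar>f s\<bar> \<le> (2 / r) powr a * weighted a f s"
proof -
  have "1 \<le> (2 / r * s) powr a"
    using assms by (intro ge_one_powr_ge_zero) (auto simp: field_simps)
  also have "(2 / r * s) powr a = (2 / r) powr a * s powr a"
    using assms by (subst powr_mult) auto
  finally have "\<bar>f s\<bar> \<le> \<bar>f s\<bar> * ((2 / r) powr a * s powr a)"
    by (simp add: mult_le_cancel_left1)
  then show ?thesis
    using assms by (simp add: weighted_def mult_ac)
qed

lemma sqrt_kernel_measurable [measurable]:
  "(\<lambda>(r, s). sqrt_kernel \<sigma> t r s) \<in> borel_measurable (borel \<Otimes>\<^sub>M borel)"
proof -
  have "(\<lambda>(r, s). sqrt_kernel \<sigma> t r s)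
      = (\<lambda>(r, s). (if 0 \<le> \<sigma> * (s - r) + t \<and> \<sigma> * (s - r) + t \<le> t then 1 else 0) * (\<sigma> * (s - r) + t) powr (-1/2))"
    by (auto simp: sqrt_kernel_def indicator_def fun_eq_iff)
  also have "\<dots> \<in> borel_measurable (borel \<Otimes>\<^sub>M borel)"
    by measurable
  finally show ?thesis .
qed

lemma sqrt_kernel_measurable' [measurable]: "sqrt_kernel \<sigma> t r \<in> borel_measurable borel"
  using measurable_Pair2[OF sqrt_kernel_measurable, of r] by simp

lemma kernel_integral_measurable [measurable]:
  assumes [measurable]: "f \<in> borel_measurable borel"
  shows "(\<lambda>r. kernel_integral \<sigma> f r t) \<in> borel_measurable borel"
  unfolding kernel_integral_def by (rule lborel.borel_measurable_nn_integral) measurable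

lemma kernel_integral_le_dyadic_sum:
  assumes [measurable]: "f \<in> borel_measurable borel"
    and \<sigma>: "\<sigma> \<in> {-1, 1}" and t: "t \<le> 2" "2 * t \<le> r" and r: "0 < r" and P: "0 \<le> P"
    and a: "\<And>j. a j \<le> t" "\<And>j. t \<le> a j + (1/2) ^ (j + 1)"
  shows "kernel_integral \<sigma> f r t \<le> ennreal ((2 / r) powr P) *
           (\<Sum>j. ennreal (2 powr (real j / 2)) * ball_integral (weighted P f) (r - \<sigma> * a j) (2 * (1/2) ^ j))"
proof -
  define I where "I j = {r - \<sigma> * a j - 2 * (1/2) ^ j..r - \<sigma> * a j + 2 * (1/2) ^ j}" for j
  define c where "c = (2 / r) powr P"
  have "ennreal (sqrt_kernel \<sigma> t r s * \<bar>f s\<bar>)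
      \<le> ennreal c * (\<Sum>j. ennreal (2 powr (real j / 2)) * (ennreal (weighted P f s) * indicator (I j) s))" for s
  proof (cases "sqrt_kernel \<sigma> t r s = 0")
    case False
    obtain j where j: "sqrt_kernel \<sigma> t r s \<le> 2 powr (real j / 2)" "s \<in> I j"
      using sqrt_kernel_le_dyadic(2)[OF \<sigma> t a False] by (auto simp: I_def)
    have "\<bar>f s\<bar> \<le> c * weighted P f s"
      unfolding c_def using r sqrt_kernel_le_dyadic(1)[OF \<sigma> t a False] P by (rule abs_le_weighted)
    then have "sqrt_kernel \<sigma> t r s * \<bar>f s\<bar> \<le> 2 powr (real j / 2) * (c * weighted P f s)"
      using j(1) by (intro mult_mono) (auto simp: sqrt_kernel_def)
    then have "ennreal (sqrt_kernel \<sigma> t r s * \<bar>f s\<bar>)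
        \<le> ennreal c * (ennreal (2 powr (real j / 2)) * (ennreal (weighted P f s) * indicator (I j) s))"
      using j(2) by (simp add: c_def weighted_nonneg ennreal_mult[symmetric] mult_ac ennreal_leI)
    also have "\<dots> \<le> ennreal c * (\<Sum>j. ennreal (2 powr (real j / 2)) * (ennreal (weighted P f s) * indicator (I j) s))"
      by (intro mult_left_mono ennreal_le_suminf) simp
    finally show ?thesis .
  qed simp
  then have "kernel_integral \<sigma> f r t
      \<le> (\<integral>\<^sup>+s. ennreal c * (\<Sum>j. ennreal (2 powr (real j / 2)) * (ennreal (weighted P f s) * indicator (I j) s)) \<partial>lborel)"
    unfolding kernel_integral_def by (rule nn_integral_mono)
  also have "\<dots> = ennreal c * (\<Sum>j. ennreal (2 powr (real j / 2)) * ball_integral (weighted P f) (r - \<sigma> * a j) (2 * (1/2) ^ j))"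
    by (simp add: nn_integral_cmult nn_integral_suminf ball_integral_def I_def)
  finally show ?thesis
    by (simp add: c_def)
qed

section \<open>Measurability of the maximal operator\<close>

lemma least_greater_eq:
  fixes E :: "real set"
  assumes "t \<in> E" "q < t" "\<forall>x\<in>E. \<not> (q < x \<and> x < t)"
  shows "(LEAST x. x \<in> E \<and> q < x) = t"
proof (rule Least_equality)
  show "t \<in> E \<and> q < t"
    using assms by simp
next
  fix y assume "y \<in> E \<and> q < y"
  then show "t \<le> y"
    using assms(3) by (auto simp: not_less[symmetric])
qed

lemma countable_left_dense_subset:
  fixes E :: "real set"
  obtains D where "countable D" "D \<subseteq> E" "\<And>t. t \<in> E \<Longrightarrow> t \<in> D \<or> t \<in> closure (D \<inter> {..<t})"
proof -
  obtain T where T: "countable T" "T \<subseteq> E" "E \<subseteq> closure T"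
    by (rule separable)
  \<comment> \<open>a point of \<open>E\<close> isolated from the left is the least point of \<open>E\<close> above some rational\<close>
  define least_above where "least_above q = (LEAST x. x \<in> E \<and> q < x)" for q :: real
  define D where "D = T \<union> (E \<inter> least_above ` \<rat>)"
  have "t \<in> D \<or> t \<in> closure (D \<inter> {..<t})" if t: "t \<in> E" for t
  proof (cases "\<exists>e>0. \<forall>x\<in>E. \<not> (t - e < x \<and> x < t)")
    case True
    then obtain e where e: "0 < e" "\<forall>x\<in>E. \<not> (t - e < x \<and> x < t)"
      by blast
    obtain q where q: "q \<in> \<rat>" "t - e < q" "q < t"
      using Rats_dense_in_real[of "t - e" t] e(1) by auto
    have "\<forall>x\<in>E. \<not> (q < x \<and> x < t)"
      using e(2) q(2) by auto
    then have "least_above q = t"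
      unfolding least_above_def by (rule least_greater_eq[OF t q(3)])
    then show ?thesis
      using t q by (auto simp: D_def)
  next
    case False
    have "\<exists>y\<in>D \<inter> {..<t}. dist y t < e" if e: "0 < e" for e
    proof -
      obtain x where x: "x \<in> E" "t - e < x" "x < t"
        using False e by auto
      have "x \<in> closure T" "0 < min (x - (t - e)) (t - x)"
        using T(3) x by auto
      then obtain y where y: "y \<in> T" "dist y x < min (x - (t - e)) (t - x)"
        unfolding closure_approachable by blast
      then show ?thesis
        using x by (intro bexI[of _ y]) (auto simp: D_def dist_real_def)
    qed
    then show ?thesis
      by (simp add: closure_approachable)
  qed
  moreover have "countable D" "D \<subseteq> E"
    using T by (auto simp: D_def countable_rat)
  ultimately show ?thesis
    using that by blast
qed

lemma kernel_integral_le_liminf: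
  assumes [measurable]: "f \<in> borel_measurable borel"
    and d: "\<And>n. d n < t" "d \<longlonglongrightarrow> t"
  shows "kernel_integral \<sigma> f r t \<le> liminf (\<lambda>n. kernel_integral \<sigma> f r (d n))"
proof -
  have "ennreal (sqrt_kernel \<sigma> t r s * \<bar>f s\<bar>) \<le> liminf (\<lambda>n. ennreal (sqrt_kernel \<sigma> (d n) r s * \<bar>f s\<bar>))" for s
  proof (cases "sqrt_kernel \<sigma> t r s = 0")
    case False
    define u where "u = \<sigma> * (s - r) + t"
    have u: "0 < u" "u \<le> t" and Ku: "sqrt_kernel \<sigma> t r s = u powr (-1/2)"
      using False by (auto simp: sqrt_kernel_def u_def[symmetric] indicator_def split: if_splits)
    have "eventually (\<lambda>n. t - u < d n) sequentially"
      using d(2) u by (intro order_tendstoD(1)) auto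
    then show ?thesis
    proof (intro Liminf_bounded, elim eventually_mono)
      fix n assume dn: "t - u < d n"
      define v where "v = \<sigma> * (s - r) + d n"
      have v: "0 < v" "v \<le> d n" "v \<le> u"
        using dn d(1)[of n] u by (auto simp: v_def u_def)
      have "sqrt_kernel \<sigma> t r s \<le> v powr (-1/2)"
        unfolding Ku using v by (intro powr_mono2') auto
      also have "v powr (-1/2) = sqrt_kernel \<sigma> (d n) r s"
        using v by (simp add: sqrt_kernel_def v_def[symmetric])
      finally show "ennreal (sqrt_kernel \<sigma> t r s * \<bar>f s\<bar>) \<le> ennreal (sqrt_kernel \<sigma> (d n) r s * \<bar>f s\<bar>)"
        by (intro ennreal_leI mult_right_mono) auto
    qed
  qed simp
  then have "kernel_integral \<sigma> f r t \<le> (\<integral>\<^sup>+s. liminf (\<lambda>n. ennreal (sqrt_kernel \<sigma> (d n) r s * \<bar>f s\<bar>)) \<partial>lborel)"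
    unfolding kernel_integral_def by (rule nn_integral_mono)
  also have "\<dots> \<le> liminf (\<lambda>n. kernel_integral \<sigma> f r (d n))"
    unfolding kernel_integral_def by (rule nn_integral_liminf) measurable
  finally show ?thesis .
qed

lemma kernel_maximal_eq_countable_SUP:
  assumes [measurable]: "f \<in> borel_measurable borel"
    and D: "D \<subseteq> E" "\<And>t. t \<in> E \<Longrightarrow> t \<in> D \<or> t \<in> closure (D \<inter> {..<t})"
  shows "kernel_maximal \<sigma> E f r
           = indicator {2..} r * (SUP d\<in>D. if d \<le> r / 2 then kernel_integral \<sigma> f r d else 0)"
proof -
  let ?S = "SUP d\<in>D. if d \<le> r / 2 then kernel_integral \<sigma> f r d else 0"
  have "kernel_integral \<sigma> f r t \<le> ?S" if t: "t \<in> E" "t \<le> r / 2" for t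
    using D(2)[OF t(1)]
  proof
    assume "t \<in> D"
    then show ?thesis
      using t by (intro SUP_upper2[of t]) auto
  next
    assume "t \<in> closure (D \<inter> {..<t})"
    then obtain d where d: "\<And>n. d n \<in> D" "\<And>n. d n < t" "d \<longlonglongrightarrow> t"
      by (auto simp: closure_sequential)
    have "kernel_integral \<sigma> f r t \<le> liminf (\<lambda>n. kernel_integral \<sigma> f r (d n))"
      using d by (intro kernel_integral_le_liminf) auto
    also have "\<dots> \<le> (SUP n. kernel_integral \<sigma> f r (d n))"
      unfolding liminf_SUP_INF by (intro SUP_mono) (auto intro!: INF_lower2)
    also have "\<dots> \<le> ?S"
    proof (rule SUP_least)
      fix n
      have "d n \<le> r / 2"
        using d(2)[of n] t(2) by linarith
      then show "kernel_integral \<sigma> f r (d n) \<le> ?S"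
        using d(1)[of n] by (intro SUP_upper2[of "d n"]) auto
    qed
    finally show ?thesis .
  qed
  moreover have "(if d \<le> r / 2 then kernel_integral \<sigma> f r d else 0) \<le> (SUP t\<in>{t\<in>E. t \<le> r / 2}. kernel_integral \<sigma> f r t)"
    if "d \<in> D" for d
    using that D(1) by (auto intro!: SUP_upper)
  ultimately have "(SUP t\<in>{t\<in>E. t \<le> r / 2}. kernel_integral \<sigma> f r t) = ?S"
    by (intro antisym SUP_least) auto
  then show ?thesis
    by (simp add: kernel_maximal_def)
qed

lemma kernel_maximal_measurable [measurable]:
  assumes [measurable]: "f \<in> borel_measurable borel"
  shows "kernel_maximal \<sigma> E f \<in> borel_measurable borel"
proof -
  obtain D where D: "countable D" "D \<subseteq> E" "\<And>t. t \<in> E \<Longrightarrow> t \<in> D \<or> t \<in> closure (D \<inter> {..<t})"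
    using countable_left_dense_subset[of E] by blast
  have [simp]: "countable D"
    by (fact D(1))
  have eq: "kernel_maximal \<sigma> E f = (\<lambda>r. indicator {2..} r * (SUP d\<in>D. if d \<le> r / 2 then kernel_integral \<sigma> f r d else 0))"
    by (intro ext kernel_maximal_eq_countable_SUP[OF assms D(2)]) (use D(3) in blast)
  show ?thesis
    unfolding eq by measurable
qed

section \<open>The case \<open>q = \<infinity>\<close>\<close>

lemma dyadic_Linfty_term:
  "2 powr (real j / 2) * (2 * (2 * (1/2) ^ j)) powr (1 - a) = 4 powr (1 - a) * (2 powr (a - 1/2)) ^ j"
proof -
  have "(2 * (2 * (1/2 :: real) ^ j)) powr (1 - a) = 4 powr (1 - a) * 2 powr (- real j * (1 - a))"
    by (simp add: half_power_eq_powr powr_mult powr_powr)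
  moreover have "(2 powr (a - 1/2)) ^ j = 2 powr (real j / 2) * 2 powr (- real j * (1 - a))"
    by (simp add: powr_realpow[symmetric] powr_powr flip: powr_add) (simp add: algebra_simps)
  ultimately show ?thesis
    by (simp add: mult_ac)
qed

lemma kernel_integral_le_Lp_norm:
  assumes [measurable]: "f \<in> borel_measurable borel"
    and \<sigma>: "\<sigma> \<in> {-1, 1}" and t: "t \<le> 2" "2 * t \<le> r" and r: "2 \<le> r"
    and p: "1 \<le> p" and cond: "recip_exp p < 1/2"
  shows "kernel_integral \<sigma> f r t
           \<le> ennreal (4 powr (1 - recip_exp p) / (1 - 2 powr (recip_exp p - 1/2))) * Lp_norm mu2 p (\<lambda>s. ennreal \<bar>f s\<bar>)"
proof -
  define a where "a = recip_exp p"
  define \<theta> :: real where "\<theta> = 2 powr (a - 1/2)"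
  define L where "L = Lp_norm mu2 p (\<lambda>s. ennreal \<bar>f s\<bar>)"
  have a: "0 \<le> a" "a < 1/2"
    using cond by (auto simp: a_def recip_exp_def)
  have \<theta>: "0 \<le> \<theta>" "\<theta> < 1"
    using a powr_less_mono[of "a - 1/2" 0 2] by (auto simp: \<theta>_def)
  have ball: "ball_integral (weighted a f) x (2 * (1/2) ^ j) \<le> ennreal ((2 * (2 * (1/2) ^ j)) powr (1 - a)) * L" for x j
    using ball_integral_le_Lp_norm[of "weighted a f" p "2 * (1/2) ^ j" x] p
    by (simp add: weighted_nonneg L_def a_def Lp_norm_mu2_weighted)
  have "kernel_integral \<sigma> f r t \<le> ennreal ((2 / r) powr a) *
      (\<Sum>j. ennreal (2 powr (real j / 2)) * ball_integral (weighted a f) (r - \<sigma> * t) (2 * (1/2) ^ j))"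
    using t r a by (intro kernel_integral_le_dyadic_sum \<sigma>) auto
  also have "\<dots> \<le> 1 * (\<Sum>j. L * ennreal (4 powr (1 - a)) * ennreal (\<theta> ^ j))"
  proof (rule mult_mono)
    show "ennreal ((2 / r) powr a) \<le> 1"
      using r a powr_mono2[of a "2 / r" 1] by simp
    show "(\<Sum>j. ennreal (2 powr (real j / 2)) * ball_integral (weighted a f) (r - \<sigma> * t) (2 * (1/2) ^ j))
        \<le> (\<Sum>j. L * ennreal (4 powr (1 - a)) * ennreal (\<theta> ^ j))"
    proof (rule suminf_le[OF _ summableI summableI])
      fix j
      have "ennreal (2 powr (real j / 2)) * ball_integral (weighted a f) (r - \<sigma> * t) (2 * (1/2) ^ j)
          \<le> L * ennreal (2 powr (real j / 2) * (2 * (2 * (1/2) ^ j)) powr (1 - a))"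
        using mult_left_mono[OF ball, of "ennreal (2 powr (real j / 2))"] by (simp add: ennreal_mult mult_ac)
      also have "\<dots> = L * ennreal (4 powr (1 - a) * \<theta> ^ j)"
        by (simp only: dyadic_Linfty_term \<theta>_def)
      finally show "ennreal (2 powr (real j / 2)) * ball_integral (weighted a f) (r - \<sigma> * t) (2 * (1/2) ^ j)
          \<le> L * ennreal (4 powr (1 - a)) * ennreal (\<theta> ^ j)"
        using \<theta> by (simp add: ennreal_mult mult.assoc)
    qed
  qed auto
  also have "\<dots> \<le> L * ennreal (4 powr (1 - a)) * ennreal (1 / (1 - \<theta>))"
    using suminf_le_geometric[OF \<theta>, of "\<lambda>j. L * ennreal (4 powr (1 - a)) * ennreal (\<theta> ^ j)"] by simp
  also have "\<dots> = ennreal (4 powr (1 - a) / (1 - \<theta>)) * L"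
    using \<theta> by (simp add: ennreal_mult[symmetric] mult_ac)
  finally show ?thesis
    by (simp add: a_def \<theta>_def L_def)
qed

lemma kernel_maximal_Linfty_bound:
  assumes [measurable]: "f \<in> borel_measurable borel"
    and \<sigma>: "\<sigma> \<in> {-1, 1}" and E: "E \<subseteq> {..2}" and p: "1 \<le> p" and cond: "recip_exp p < 1/2"
  shows "Lp_norm mu2 top (kernel_maximal \<sigma> E f)
           \<le> ennreal (4 powr (1 - recip_exp p) / (1 - 2 powr (recip_exp p - 1/2))) * Lp_norm mu2 p (\<lambda>s. ennreal \<bar>f s\<bar>)"
    (is "_ \<le> ?C")
proof -
  have "kernel_maximal \<sigma> E f r \<le> ?C" for r
  proof (cases "2 \<le> r")
    case True
    then have "(SUP t\<in>{t\<in>E. t \<le> r / 2}. kernel_integral \<sigma> f r t) \<le> ?C"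
      using E p cond by (intro SUP_least kernel_integral_le_Lp_norm \<sigma>) auto
    then show ?thesis
      using True by (simp add: kernel_maximal_def)
  qed (simp add: kernel_maximal_def)
  then have "esssup mu2 (kernel_maximal \<sigma> E f) \<le> ?C"
    by (intro esssup_I) (auto simp: mu2_def)
  then show ?thesis
    by (simp add: Lp_norm_def)
qed

section \<open>The case \<open>q < \<infinity>\<close>\<close>

(* For covers of E by the intervals [A j i, A j i + 2^(-j-1)], i < N j: the weighted l^q sum over
   scales j of the local integrals of F around the points r - sigma A j i. *)
definition dyadic_cover_sum ::
    "real \<Rightarrow> (nat \<Rightarrow> nat) \<Rightarrow> (nat \<Rightarrow> nat \<Rightarrow> real) \<Rightarrow> real \<Rightarrow> real \<Rightarrow> (real \<Rightarrow> real) \<Rightarrow> real \<Rightarrow> ennreal" where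
  "dyadic_cover_sum \<sigma> N A b q F r = (\<Sum>j. ennreal (2 powr (b * q * real j)) *
     (\<Sum>i<N j. enn_powr (ball_integral F (r - \<sigma> * A j i) (2 * (1/2) ^ j)) q))"

lemma dyadic_cover_sum_measurable [measurable]:
  assumes [measurable]: "F \<in> borel_measurable borel"
  shows "dyadic_cover_sum \<sigma> N A b q F \<in> borel_measurable borel"
  unfolding dyadic_cover_sum_def by measurable

lemma dyadic_sum_le_dyadic_cover_sum:
  assumes i: "\<And>j. i j < N j"
  shows "(\<Sum>j. enn_powr (ennreal (2 powr (b * real j)) * ball_integral F (r - \<sigma> * A j (i j)) (2 * (1/2) ^ j)) q)
           \<le> dyadic_cover_sum \<sigma> N A b q F r"
  unfolding dyadic_cover_sum_def
proof (rule suminf_le[OF _ summableI summableI])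
  fix j
  define y where "y = ball_integral F (r - \<sigma> * A j (i j)) (2 * (1/2) ^ j)"
  have "enn_powr y q \<le> (\<Sum>i<N j. enn_powr (ball_integral F (r - \<sigma> * A j i) (2 * (1/2) ^ j)) q)"
    unfolding y_def by (rule member_le_sum) (use i in auto)
  moreover have "enn_powr (ennreal (2 powr (b * real j)) * y) q = ennreal (2 powr (b * q * real j)) * enn_powr y q"
    by (subst enn_powr_mult) (simp_all add: powr_powr mult_ac)
  ultimately show "enn_powr (ennreal (2 powr (b * real j)) * y) q
      \<le> ennreal (2 powr (b * q * real j)) * (\<Sum>i<N j. enn_powr (ball_integral F (r - \<sigma> * A j i) (2 * (1/2) ^ j)) q)"
    by (simp add: mult_left_mono)
qed

lemma covering_indices:
  assumes cover: "\<And>j. E \<subseteq> (\<Union>i<N j. {A j i..A j i + \<delta> j})" and t: "t \<in> E"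
  shows "\<exists>i. \<forall>j. i j < N j \<and> A j (i j) \<le> t \<and> t \<le> A j (i j) + \<delta> j"
proof (rule choice, rule allI)
  fix j
  have "t \<in> (\<Union>i<N j. {A j i..A j i + \<delta> j})"
    using cover[of j] t by blast
  then show "\<exists>i. i < N j \<and> A j i \<le> t \<and> t \<le> A j i + \<delta> j"
    by auto
qed

lemma kernel_integral_le_dyadic_cover_sum:
  assumes [measurable]: "f \<in> borel_measurable borel"
    and \<sigma>: "\<sigma> \<in> {-1, 1}" and t: "t \<in> E" "t \<le> 2" "2 * t \<le> r" and r: "0 < r"
    and P: "0 \<le> P" and q: "0 < q" and b: "1/2 < b"
    and cover: "\<And>j. E \<subseteq> (\<Union>i<N j. {A j i..A j i + (1/2) ^ (j + 1)})"
  shows "kernel_integral \<sigma> f r t \<le> ennreal ((2 / r) powr P)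
           * (enn_powr (dyadic_cover_sum \<sigma> N A b q (weighted P f) r) (1 / q) * ennreal (1 / (1 - 2 powr (1/2 - b))))"
proof -
  define w :: real where "w = 2 powr (1/2 - b)"
  have w: "0 \<le> w" "w < 1"
    using b powr_less_mono[of "1/2 - b" 0 2] by (auto simp: w_def)
  obtain i where "\<forall>j. i j < N j \<and> A j (i j) \<le> t \<and> t \<le> A j (i j) + (1/2) ^ (j + 1)"
    using covering_indices[where \<delta>="\<lambda>j. (1/2) ^ (j + 1)", OF cover t(1)] by blast
  then have i: "\<And>j. i j < N j" "\<And>j. A j (i j) \<le> t" "\<And>j. t \<le> A j (i j) + (1/2) ^ (j + 1)"
    by auto
  define y where "y j = ball_integral (weighted P f) (r - \<sigma> * A j (i j)) (2 * (1/2) ^ j)" for j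
  have "(\<Sum>j. ennreal (2 powr (real j / 2)) * y j) = (\<Sum>j. ennreal (w ^ j) * (ennreal (2 powr (b * real j)) * y j))"
  proof -
    have "2 powr (real j / 2) = w ^ j * 2 powr (b * real j)" for j
      by (simp add: w_def powr_realpow[symmetric] powr_powr flip: powr_add) (simp add: algebra_simps)
    then show ?thesis
      using w by (simp add: ennreal_mult mult.assoc)
  qed
  also have "\<dots> \<le> enn_powr (\<Sum>j. enn_powr (ennreal (2 powr (b * real j)) * y j) q) (1 / q) * ennreal (1 / (1 - w))"
    by (rule suminf_geometric_le_lq[OF w q])
  also have "\<dots> \<le> enn_powr (dyadic_cover_sum \<sigma> N A b q (weighted P f) r) (1 / q) * ennreal (1 / (1 - w))"
    unfolding y_def using q i(1) by (intro mult_right_mono enn_powr_mono dyadic_sum_le_dyadic_cover_sum) auto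
  finally have sum_le: "(\<Sum>j. ennreal (2 powr (real j / 2)) * y j)
      \<le> enn_powr (dyadic_cover_sum \<sigma> N A b q (weighted P f) r) (1 / q) * ennreal (1 / (1 - w))" .
  have "kernel_integral \<sigma> f r t \<le> ennreal ((2 / r) powr P) * (\<Sum>j. ennreal (2 powr (real j / 2)) * y j)"
    unfolding y_def using t r P i by (intro kernel_integral_le_dyadic_sum \<sigma>) auto
  also have "\<dots> \<le> ennreal ((2 / r) powr P)
      * (enn_powr (dyadic_cover_sum \<sigma> N A b q (weighted P f) r) (1 / q) * ennreal (1 / (1 - w)))"
    by (rule mult_left_mono[OF sum_le]) simp
  finally show ?thesis
    by (simp add: w_def)
qed

lemma kernel_maximal_le_dyadic_cover_sum:
  assumes [measurable]: "f \<in> borel_measurable borel"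
    and \<sigma>: "\<sigma> \<in> {-1, 1}" and E: "E \<subseteq> {..2}" and P: "0 \<le> P" and q: "0 < q" and b: "1/2 < b"
    and cover: "\<And>j. E \<subseteq> (\<Union>i<N j. {A j i..A j i + (1/2) ^ (j + 1)})"
  shows "kernel_maximal \<sigma> E f r \<le> ennreal ((2 / r) powr P)
           * (enn_powr (dyadic_cover_sum \<sigma> N A b q (weighted P f) r) (1 / q) * ennreal (1 / (1 - 2 powr (1/2 - b))))"
proof (cases "2 \<le> r")
  case True
  then show ?thesis
    unfolding kernel_maximal_def using E P q b
    by (auto intro!: SUP_least kernel_integral_le_dyadic_cover_sum[OF _ \<sigma> _ _ _ _ _ _ _ cover])
qed (simp add: kernel_maximal_def)

lemma dyadic_Lq_term:
  "2 powr (b * q * real j) * ((1/2) ^ (j + 1)) powr (- \<alpha>) * (2 * (2 * (1/2) ^ j)) powr e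
     = 2 powr (\<alpha> + 2 * e) * (2 powr (b * q + \<alpha> - e)) ^ j"
proof -
  have "((1/2 :: real) ^ (j + 1)) powr (- \<alpha>) = 2 powr (\<alpha> * (real j + 1))"
    by (simp only: half_power_eq_powr powr_powr) (simp add: algebra_simps)
  moreover have "(2 * (2 * (1/2 :: real) ^ j)) powr e = 2 powr (e * (2 - real j))"
  proof -
    have "2 * (2 * (1/2 :: real) ^ j) = 2 powr (2 - real j)"
      by (simp add: half_power_eq_powr powr_diff powr_minus_divide)
    then show ?thesis
      by (simp add: powr_powr mult.commute)
  qed
  moreover have "(2 powr (b * q + \<alpha> - e)) ^ j = 2 powr ((b * q + \<alpha> - e) * real j)"
    by (simp add: powr_realpow[symmetric] powr_powr)
  ultimately show ?thesis
    by (simp flip: powr_add) (simp add: algebra_simps)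
qed

lemma nn_integral_dyadic_cover_sum_le:
  fixes p q b \<alpha> c :: real
  assumes [measurable]: "F \<in> borel_measurable borel"
    and F: "\<And>s. 0 \<le> F s" and p: "1 \<le> p" "p \<le> q"
    and c: "0 \<le> c" and count: "\<And>j. real (N j) \<le> c * ((1/2) ^ (j + 1)) powr (- \<alpha>)"
    and \<theta>: "b * q + \<alpha> - (q - q / p + 1) < 0"
  shows "(\<integral>\<^sup>+r. dyadic_cover_sum \<sigma> N A b q F r \<partial>lborel)
           \<le> ennreal (c * 2 powr (\<alpha> + 2 * (q - q / p + 1)) / (1 - 2 powr (b * q + \<alpha> - (q - q / p + 1))))
             * enn_powr (Lp_norm lborel (ennreal p) (\<lambda>s. ennreal (F s))) q"
proof -
  define e where "e = q - q / p + 1"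
  define \<theta> :: real where "\<theta> = 2 powr (b * q + \<alpha> - e)"
  define K where "K = c * 2 powr (\<alpha> + 2 * e)"
  define \<Lambda> where "\<Lambda> = enn_powr (Lp_norm lborel (ennreal p) (\<lambda>s. ennreal (F s))) q"
  define G where "G j = (\<integral>\<^sup>+x. enn_powr (ball_integral F x (2 * (1/2) ^ j)) q \<partial>lborel)" for j
  have \<theta>1: "0 \<le> \<theta>" "\<theta> < 1"
    using \<theta> powr_less_mono[of "b * q + \<alpha> - e" 0 2] by (auto simp: \<theta>_def e_def)
  have shift: "(\<integral>\<^sup>+r. enn_powr (ball_integral F (r - x0) \<rho>) q \<partial>lborel) = (\<integral>\<^sup>+x. enn_powr (ball_integral F x \<rho>) q \<partial>lborel)"
    for x0 \<rho>
    using nn_integral_real_affine[of "\<lambda>x. enn_powr (ball_integral F x \<rho>) q" 1 "- x0"] by simp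
  have "(\<integral>\<^sup>+r. dyadic_cover_sum \<sigma> N A b q F r \<partial>lborel) = (\<Sum>j. ennreal (2 powr (b * q * real j)) * (of_nat (N j) * G j))"
    unfolding dyadic_cover_sum_def
    by (simp add: nn_integral_suminf nn_integral_cmult nn_integral_sum shift G_def)
  also have "\<dots> \<le> \<Lambda> * ennreal K * ennreal (1 / (1 - \<theta>))"
  proof (rule suminf_le_geometric[OF \<theta>1])
    fix j
    have "G j \<le> ennreal ((2 * (2 * (1/2) ^ j)) powr e) * \<Lambda>"
      unfolding G_def \<Lambda>_def e_def using F p by (intro ball_integral_Lq_le) auto
    then have "ennreal (2 powr (b * q * real j)) * (of_nat (N j) * G j)
        \<le> ennreal (2 powr (b * q * real j)) * (ennreal (c * ((1/2) ^ (j + 1)) powr (- \<alpha>)) * (ennreal ((2 * (2 * (1/2) ^ j)) powr e) * \<Lambda>))"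
      using count[of j] by (intro mult_left_mono mult_mono) (auto simp: ennreal_of_nat_eq_real_of_nat)
    also have "\<dots> = \<Lambda> * ennreal (c * (2 powr (b * q * real j) * ((1/2) ^ (j + 1)) powr (- \<alpha>) * (2 * (2 * (1/2) ^ j)) powr e))"
      using c by (simp add: ennreal_mult mult_ac)
    also have "\<dots> = \<Lambda> * ennreal (c * (2 powr (\<alpha> + 2 * e) * \<theta> ^ j))"
      by (simp only: dyadic_Lq_term \<theta>_def)
    also have "\<dots> = \<Lambda> * ennreal K * ennreal (\<theta> ^ j)"
      using c \<theta>1 by (simp add: K_def ennreal_mult mult_ac)
    finally show "ennreal (2 powr (b * q * real j)) * (of_nat (N j) * G j) \<le> \<Lambda> * ennreal K * ennreal (\<theta> ^ j)" .
  qed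
  also have "\<dots> = ennreal (K / (1 - \<theta>)) * \<Lambda>"
    using c \<theta>1 by (simp add: K_def ennreal_mult[symmetric] mult_ac)
  finally show ?thesis
    by (simp add: K_def \<theta>_def e_def \<Lambda>_def)
qed

lemma mu2_weight_le:
  fixes r a :: real
  assumes "2 \<le> r" "1 \<le> a"
  shows "r * (2 / r) powr a \<le> 2"
proof -
  have "(2 / r) powr a \<le> (2 / r) powr 1"
    using assms by (intro powr_mono') auto
  then show ?thesis
    using assms by (simp add: field_simps)
qed

lemma mu2_density_kernel_maximal_le:
  assumes [measurable]: "f \<in> borel_measurable borel"
    and \<sigma>: "\<sigma> \<in> {-1, 1}" and E: "E \<subseteq> {..2}" and p: "1 \<le> p" "p \<le> q" and b: "1/2 < b"
    and cover: "\<And>j. E \<subseteq> (\<Union>i<N j. {A j i..A j i + (1/2) ^ (j + 1)})"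
  shows "ennreal r * indicator {0<..} r * enn_powr (kernel_maximal \<sigma> E f r) q
           \<le> ennreal (2 * (1 / (1 - 2 powr (1/2 - b))) powr q) * dyadic_cover_sum \<sigma> N A b q (weighted (1 / p) f) r"
proof (cases "2 \<le> r")
  case True
  define W where "W = 1 / (1 - 2 powr (1/2 - b))"
  define T where "T = dyadic_cover_sum \<sigma> N A b q (weighted (1 / p) f) r"
  have W: "0 \<le> W"
    using b powr_less_mono[of "1/2 - b" 0 2] by (simp add: W_def)
  have "kernel_maximal \<sigma> E f r \<le> ennreal ((2 / r) powr (1 / p)) * (enn_powr T (1 / q) * ennreal W)"
    unfolding T_def W_def using p by (intro kernel_maximal_le_dyadic_cover_sum[OF _ \<sigma> E _ _ b cover]) auto
  also have "\<dots> = ennreal ((2 / r) powr (1 / p) * W) * enn_powr T (1 / q)"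
    using W by (simp add: ennreal_mult mult_ac)
  finally have "kernel_maximal \<sigma> E f r \<le> ennreal ((2 / r) powr (1 / p) * W) * enn_powr T (1 / q)" .
  then have "enn_powr (kernel_maximal \<sigma> E f r) q \<le> enn_powr (ennreal ((2 / r) powr (1 / p) * W) * enn_powr T (1 / q)) q"
    using p by (intro enn_powr_mono) auto
  also have "\<dots> = ennreal ((2 / r) powr (q / p) * W powr q) * T"
    using p True W by (simp add: enn_powr_mult enn_powr_powr powr_mult powr_powr)
  finally have "ennreal r * enn_powr (kernel_maximal \<sigma> E f r) q \<le> ennreal r * (ennreal ((2 / r) powr (q / p) * W powr q) * T)"
    by (rule mult_left_mono) simp
  also have "\<dots> = ennreal (r * (2 / r) powr (q / p) * W powr q) * T"
    using True by (simp add: ennreal_mult mult_ac)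
  also have "\<dots> \<le> ennreal (2 * W powr q) * T"
    using True p mu2_weight_le[of r "q / p"] by (intro mult_right_mono ennreal_leI mult_right_mono) auto
  finally show ?thesis
    using True by (simp add: T_def W_def)
qed (simp add: kernel_maximal_def)

(* b > 1/2 absorbs the factor 2^(j/2) of the dyadic decomposition; the second condition makes the
   series over j in nn_integral_dyadic_cover_sum_le converge. *)
lemma exists_dyadic_exponent:
  fixes p q \<alpha> :: real
  assumes p: "1 \<le> p" "p \<le> q" and cond: "1 / p - (1 - \<alpha>) / q - 1/2 < 0"
  obtains b where "1/2 < b" "b * q + \<alpha> - (q - q / p + 1) < 0"
proof -
  define D where "D = (q - q / p + 1 - \<alpha>) / q"
  have "D = 1/2 - (1 / p - (1 - \<alpha>) / q - 1/2)"
    using p by (simp add: D_def field_simps)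
  then have "1/2 < D"
    using cond by linarith
  define b where "b = (1/2 + D) / 2"
  have b: "1/2 < b" "b < D"
    using \<open>1/2 < D\<close> by (simp_all add: b_def)
  then have "b * q < D * q"
    using p by (intro mult_strict_right_mono) auto
  moreover have "D * q = q - q / p + 1 - \<alpha>"
    using p by (simp add: D_def)
  ultimately have "b * q + \<alpha> - (q - q / p + 1) < 0"
    by linarith
  with b(1) show ?thesis
    by (rule that)
qed

lemma kernel_maximal_Lq_bound:
  fixes p q \<alpha> c :: real
  assumes \<sigma>: "\<sigma> \<in> {-1, 1}" and E: "E \<subseteq> {..2}" and p: "1 \<le> p" "p \<le> q"
    and cover: "\<And>j. E \<subseteq> (\<Union>i<N j. {A j i..A j i + (1/2) ^ (j + 1)})"
    and c: "0 \<le> c" and count: "\<And>j. real (N j) \<le> c * ((1/2) ^ (j + 1)) powr (- \<alpha>)"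
    and cond: "1 / p - (1 - \<alpha>) / q - 1/2 < 0"
  shows "\<exists>C. \<forall>f. f \<in> borel_measurable borel \<longrightarrow>
           Lp_norm mu2 (ennreal q) (kernel_maximal \<sigma> E f) \<le> ennreal C * Lp_norm mu2 (ennreal p) (\<lambda>s. ennreal \<bar>f s\<bar>)"
proof -
  define e where "e = q - q / p + 1"
  obtain b where b: "1/2 < b" and \<theta>: "b * q + \<alpha> - e < 0"
    using exists_dyadic_exponent[OF p cond] by (auto simp: e_def)
  define V where "V = 2 * (1 / (1 - 2 powr (1/2 - b))) powr q"
  define K where "K = c * 2 powr (\<alpha> + 2 * e) / (1 - 2 powr (b * q + \<alpha> - e))"
  have K: "0 \<le> K"
    using c \<theta> powr_less_mono[of "b * q + \<alpha> - e" 0 2] by (simp add: K_def)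
  have V: "0 \<le> V"
    by (simp add: V_def)
  show ?thesis
  proof (intro exI allI impI)
    fix f :: "real \<Rightarrow> real"
    assume f [measurable]: "f \<in> borel_measurable borel"
    define L where "L = Lp_norm lborel (ennreal p) (\<lambda>s. ennreal (weighted (1 / p) f s))"
    have "(\<integral>\<^sup>+r. enn_powr (kernel_maximal \<sigma> E f r) q \<partial>mu2)
        \<le> (\<integral>\<^sup>+r. ennreal V * dyadic_cover_sum \<sigma> N A b q (weighted (1 / p) f) r \<partial>lborel)"
      unfolding mu2_def V_def using p b
      by (subst nn_integral_density) (auto intro!: nn_integral_mono mu2_density_kernel_maximal_le[OF f \<sigma> E _ _ _ cover])
    also have "\<dots> = ennreal V * (\<integral>\<^sup>+r. dyadic_cover_sum \<sigma> N A b q (weighted (1 / p) f) r \<partial>lborel)"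
      by (rule nn_integral_cmult) simp
    also have "\<dots> \<le> ennreal V * (ennreal K * enn_powr L q)"
      unfolding K_def L_def e_def
      by (intro mult_left_mono nn_integral_dyadic_cover_sum_le[OF _ weighted_nonneg p c count \<theta>[unfolded e_def]]) simp_all
    also have "\<dots> = ennreal (V * K) * enn_powr L q"
      using V K by (simp add: ennreal_mult mult.assoc)
    finally have "Lp_norm mu2 (ennreal q) (kernel_maximal \<sigma> E f) \<le> enn_powr (ennreal (V * K) * enn_powr L q) (1 / q)"
      using p by (simp add: Lp_norm_def enn_powr_mono)
    also have "\<dots> = ennreal ((V * K) powr (1 / q)) * Lp_norm mu2 (ennreal p) (\<lambda>s. ennreal \<bar>f s\<bar>)"
      using p V K by (simp add: enn_powr_mult enn_powr_powr L_def Lp_norm_mu2_weighted recip_exp_def)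
    finally show "Lp_norm mu2 (ennreal q) (kernel_maximal \<sigma> E f)
        \<le> ennreal ((V * K) powr (1 / q)) * Lp_norm mu2 (ennreal p) (\<lambda>s. ennreal \<bar>f s\<bar>)" .
  qed
qed

lemma grid_cover:
  assumes E: "E \<subseteq> {a..a + 1}" and \<delta>: "0 < \<delta>"
  shows "E \<subseteq> (\<Union>i<nat \<lfloor>1 / \<delta>\<rfloor> + 1. {a + real i * \<delta>..a + real i * \<delta> + \<delta>})"
proof
  fix x assume x: "x \<in> E"
  define i where "i = nat \<lfloor>(x - a) / \<delta>\<rfloor>"
  have xa: "0 \<le> x - a" "x - a \<le> 1"
    using x E by auto
  have fl: "0 \<le> \<lfloor>(x - a) / \<delta>\<rfloor>" "\<lfloor>(x - a) / \<delta>\<rfloor> \<le> \<lfloor>1 / \<delta>\<rfloor>"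
    using xa \<delta> by (simp, intro floor_mono divide_right_mono) auto
  then have "real i = \<lfloor>(x - a) / \<delta>\<rfloor>"
    by (simp add: i_def)
  then have "real i \<le> (x - a) / \<delta>" "(x - a) / \<delta> < real i + 1"
    by linarith+
  then have "a + real i * \<delta> \<le> x" "x \<le> a + real i * \<delta> + \<delta>"
    using \<delta> by (simp_all add: field_simps)
  moreover have "i < nat \<lfloor>1 / \<delta>\<rfloor> + 1"
    using fl by (simp add: i_def)
  ultimately show "x \<in> (\<Union>i<nat \<lfloor>1 / \<delta>\<rfloor> + 1. {a + real i * \<delta>..a + real i * \<delta> + \<delta>})"
    by auto
qed

lemma cover_num_covers:
  assumes "E \<subseteq> {a..a + 1}" "0 < \<delta>"
  shows "\<exists>A :: nat \<Rightarrow> real. E \<subseteq> (\<Union>i<cover_num E \<delta>. {A i..A i + \<delta>})"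
  unfolding cover_num_def by (rule LeastI_ex) (use grid_cover[OF assms] in \<open>blast intro: exI[of _ "\<lambda>i. a + real i * \<delta>"]\<close>)

lemma minkowski_dim_bound:
  assumes E: "E \<subseteq> {a..a + 1}" and z: "minkowski_dim E < z"
  obtains \<alpha> c where "\<alpha> < z" "0 \<le> c" "\<And>\<delta>. \<delta> \<in> {0<..<1} \<Longrightarrow> real (cover_num E \<delta>) \<le> c * \<delta> powr (- \<alpha>)"
proof -
  define S where "S = {\<alpha>. \<alpha> > 0 \<and> (\<exists>c. \<forall>\<delta>\<in>{0<..<1}. real (cover_num E \<delta>) \<le> c * \<delta> powr (- \<alpha>))}"
  have "real (cover_num E \<delta>) \<le> 2 * \<delta> powr (-1)" if \<delta>: "\<delta> \<in> {0<..<1}" for \<delta>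
  proof -
    have "cover_num E \<delta> \<le> nat \<lfloor>1 / \<delta>\<rfloor> + 1"
      unfolding cover_num_def using grid_cover[OF E, of \<delta>] \<delta>
      by (intro Least_le exI[of _ "\<lambda>i. a + real i * \<delta>"]) auto
    then have "real (cover_num E \<delta>) \<le> real (nat \<lfloor>1 / \<delta>\<rfloor> + 1)"
      by linarith
    also have "\<dots> \<le> 1 / \<delta> + 1"
      using \<delta> by simp
    also have "\<dots> \<le> 2 * \<delta> powr (-1)"
      using \<delta> by (simp add: powr_minus_divide field_simps)
    finally show ?thesis .
  qed
  then have "1 \<in> S"
    unfolding S_def by (intro CollectI conjI exI[of _ 2]) auto
  moreover have "Inf S < z"
    using z by (simp add: minkowski_dim_def S_def)
  ultimately obtain \<alpha> where "\<alpha> \<in> S" "\<alpha> < z"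
    using cInf_lessD[of S z] by blast
  then obtain c where \<alpha>: "\<alpha> < z" and bound: "\<And>\<delta>. \<delta> \<in> {0<..<1} \<Longrightarrow> real (cover_num E \<delta>) \<le> c * \<delta> powr (- \<alpha>)"
    unfolding S_def by blast
  have "0 \<le> real (cover_num E (1/2))"
    by simp
  also have "\<dots> \<le> c * (1/2) powr (- \<alpha>)"
    by (rule bound) simp
  finally have "0 \<le> c * (1/2) powr (- \<alpha>)" .
  then have "0 \<le> c"
    by (simp add: zero_le_mult_iff)
  then show ?thesis
    by (rule that[OF \<alpha> _ bound])
qed

lemma kernel_maximal_bound:
  fixes E :: "real set" and \<beta> :: real and p q :: ennreal
  assumes \<sigma>: "\<sigma> \<in> {-1, 1}" and E: "E \<subseteq> {1..2}" and \<beta>: "minkowski_dim E = \<beta>"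
    and p: "1 \<le> p" "p \<le> q" and cond: "recip_exp p - (1 - \<beta>) * recip_exp q - 1/2 < 0"
  shows "\<exists>C. \<forall>f. f \<in> borel_measurable borel \<longrightarrow>
           Lp_norm mu2 q (kernel_maximal \<sigma> E f) \<le> ennreal C * Lp_norm mu2 p (\<lambda>s. ennreal \<bar>f s\<bar>)"
proof -
  have E2: "E \<subseteq> {..2}"
    using E by auto
  show ?thesis
  proof (cases q)
    case top
    then have "recip_exp p < 1/2"
      using cond by (simp add: recip_exp_def)
    then have "\<forall>f. f \<in> borel_measurable borel \<longrightarrow> Lp_norm mu2 top (kernel_maximal \<sigma> E f)
        \<le> ennreal (4 powr (1 - recip_exp p) / (1 - 2 powr (recip_exp p - 1/2))) * Lp_norm mu2 p (\<lambda>s. ennreal \<bar>f s\<bar>)"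
      using kernel_maximal_Linfty_bound[OF _ \<sigma> E2 p(1)] by blast
    then show ?thesis
      unfolding top by blast
  next
    case (real q')
    then obtain p' where p': "p = ennreal p'" "1 \<le> p'" "p' \<le> q'"
      using p by (cases p) (auto simp: ennreal_le_iff2 top_unique)
    define \<gamma> where "\<gamma> = 1 / p' - (1 - \<beta>) / q' - 1/2"
    have \<gamma>: "\<gamma> < 0"
      using cond real p' by (simp add: \<gamma>_def recip_exp_def)
    have "minkowski_dim E < \<beta> - q' * \<gamma>"
      using \<beta> \<gamma> p' mult_pos_neg[of q' \<gamma>] by simp
    then obtain \<alpha> c where \<alpha>: "\<alpha> < \<beta> - q' * \<gamma>" and c: "0 \<le> c"
      and count: "\<And>\<delta>. \<delta> \<in> {0<..<1} \<Longrightarrow> real (cover_num E \<delta>) \<le> c * \<delta> powr (- \<alpha>)"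
      using minkowski_dim_bound[of E 1] E by auto
    have "1 / p' - (1 - \<alpha>) / q' - 1/2 = \<gamma> + (\<alpha> - \<beta>) / q'"
      using p' by (simp add: \<gamma>_def field_simps)
    also have "\<dots> < 0"
      using \<alpha> \<gamma> p' by (simp add: field_simps)
    finally have cond': "1 / p' - (1 - \<alpha>) / q' - 1/2 < 0" .
    have "\<forall>j. \<exists>A. E \<subseteq> (\<Union>i<cover_num E ((1/2) ^ (j + 1)). {A i..A i + (1/2) ^ (j + 1)})"
      using cover_num_covers[of E 1] E by simp
    then obtain A where A: "\<And>j. E \<subseteq> (\<Union>i<cover_num E ((1/2) ^ (j + 1)). {A j i..A j i + (1/2) ^ (j + 1)})"
      by metis
    have count': "real (cover_num E ((1/2) ^ (j + 1))) \<le> c * ((1/2) ^ (j + 1)) powr (- \<alpha>)" for j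
      by (rule count) (use power_le_one[of "1/2 :: real" j] in simp)
    show ?thesis
      unfolding real p'(1) by (rule kernel_maximal_Lq_bound[OF \<sigma> E2 p'(2,3) A c count' cond'])
  qed
qed

theorem proposition3p6:
  fixes E :: "real set" and \<beta> :: real and p q :: ennreal
  assumes "E \<subseteq> {1..2}"
    and "minkowski_dim E = \<beta>"
    and "1 \<le> p" and "p \<le> q"
    and "recip_exp p - (1 - \<beta>) * recip_exp q - 1/2 < 0"
  shows "\<exists>C::real. \<forall>f0 :: real \<Rightarrow> real. f0 \<in> borel_measurable borel \<longrightarrow>
           Lp_norm mu2 q (R1 E f0) \<le> ennreal C * Lp_norm mu2 p (\<lambda>s. ennreal \<bar>f0 s\<bar>) \<and>
           Lp_norm mu2 q (R2 E f0) \<le> ennreal C * Lp_norm mu2 p (\<lambda>s. ennreal \<bar>f0 s\<bar>)"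
proof -
  obtain C1 where C1: "\<forall>f. f \<in> borel_measurable borel \<longrightarrow>
      Lp_norm mu2 q (kernel_maximal 1 E f) \<le> ennreal C1 * Lp_norm mu2 p (\<lambda>s. ennreal \<bar>f s\<bar>)"
    using kernel_maximal_bound[of 1, OF _ assms] by auto
  obtain C2 where C2: "\<forall>f. f \<in> borel_measurable borel \<longrightarrow>
      Lp_norm mu2 q (kernel_maximal (-1) E f) \<le> ennreal C2 * Lp_norm mu2 p (\<lambda>s. ennreal \<bar>f s\<bar>)"
    using kernel_maximal_bound[of "-1", OF _ assms] by auto
  have le: "ennreal C1 * X \<le> ennreal (max C1 C2) * X" "ennreal C2 * X \<le> ennreal (max C1 C2) * X" for X
    by (simp_all add: mult_right_mono ennreal_leI)
  show ?thesis
  proof (intro exI[of _ "max C1 C2"] allI impI conjI)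
    fix f0 :: "real \<Rightarrow> real"
    assume f0: "f0 \<in> borel_measurable borel"
    show "Lp_norm mu2 q (R1 E f0) \<le> ennreal (max C1 C2) * Lp_norm mu2 p (\<lambda>s. ennreal \<bar>f0 s\<bar>)"
      unfolding R1_eq_kernel_maximal using C1 f0 by (blast intro: order_trans le(1))
    show "Lp_norm mu2 q (R2 E f0) \<le> ennreal (max C1 C2) * Lp_norm mu2 p (\<lambda>s. ennreal \<bar>f0 s\<bar>)"
      unfolding R2_eq_kernel_maximal using C2 f0 by (blast intro: order_trans le(2))
  qed
qed

end
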